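(* Let $n\ge3$, let $q\in\mathbb{C}\setminus\{0\}$ not be a root of unity, and put $a=q/(1+q)$, $b=1/(1+q)$. For $i=1,\dots,n-1$ define the $(n-1)\times(n-1)$ matrices \[u_i=(1-\delta_{i,1})\,b\,e_{i,i-1}+e_{ii}+(1-\delta_{i,n-1})\,a\,e_{i,i+1},\] \[v_i=(1-\delta_{i,1})\,b(n-1)\,e_{i,i-1}+(2-n)\,e_{ii}+(1-\delta_{i,n-1})\,a(n-1)\,e_{i,i+1}+E(i).\] Then (a) the Lie algebra generated by $u_1,\dots,u_{n-1}$ is $\mathfrak{gl}_{n-1}(\mathbb{C})$, and (b) the Lie algebra generated by $v_1,\dots,v_{n-1}$ is $\mathfrak{sl}_{n-1}(\mathbb{C})$.
   Context: $e_{ij}$ ($1\le i,j\le n-1$) are the standard matrix units of $(n-1)\times(n-1)$ complex matrices, $E(i)=I_{n-1}-e_{ii}$, and $\delta$ is the Kronecker delta (terms with an index outside $1,\dots,n-1$ are absent). Lie algebras are taken inside $\mathfrak{gl}_{n-1}(\mathbb{C})$ with the commutator bracket. *)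

theory Defs
  imports "Jordan_Normal_Form.Matrix"
begin

text \<open>Matrix unit e_{ij} of size m x m, with 1-based indices i, j in 1..m.
  If an index lies outside 1..m, the term is absent (zero matrix).\<close>
definition emat :: "nat \<Rightarrow> nat \<Rightarrow> nat \<Rightarrow> complex mat" where
  "emat m i j = mat m m (\<lambda>(r, c).
     if 1 \<le> i \<and> i \<le> m \<and> 1 \<le> j \<and> j \<le> m \<and> r = i - 1 \<and> c = j - 1 then 1 else 0)"

definition kdelta :: "nat \<Rightarrow> nat \<Rightarrow> complex" where
  "kdelta i j = (if i = j then 1 else 0)"

definition Emat :: "nat \<Rightarrow> nat \<Rightarrow> complex mat" where
  "Emat m i = one_mat m - emat m i i"

definition ucoef_a :: "complex \<Rightarrow> complex" where "ucoef_a q = q / (1 + q)"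
definition ucoef_b :: "complex \<Rightarrow> complex" where "ucoef_b q = 1 / (1 + q)"

definition umat :: "nat \<Rightarrow> complex \<Rightarrow> nat \<Rightarrow> complex mat" where
  "umat n q i =
     ((1 - kdelta i 1) * ucoef_b q) \<cdot>\<^sub>m emat (n-1) i (i - 1)
     + emat (n-1) i i
     + ((1 - kdelta i (n-1)) * ucoef_a q) \<cdot>\<^sub>m emat (n-1) i (i + 1)"

definition vmat :: "nat \<Rightarrow> complex \<Rightarrow> nat \<Rightarrow> complex mat" where
  "vmat n q i =
     ((1 - kdelta i 1) * ucoef_b q * of_nat (n - 1)) \<cdot>\<^sub>m emat (n-1) i (i - 1)
     + (2 - of_nat n :: complex) \<cdot>\<^sub>m emat (n-1) i i
     + ((1 - kdelta i (n-1)) * ucoef_a q * of_nat (n - 1)) \<cdot>\<^sub>m emat (n-1) i (i + 1)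
     + Emat (n-1) i"

inductive_set lie_gen :: "nat \<Rightarrow> complex mat set \<Rightarrow> complex mat set" for m S where
  gen: "x \<in> S \<Longrightarrow> x \<in> lie_gen m S"
| zero: "zero_mat m m \<in> lie_gen m S"
| add: "x \<in> lie_gen m S \<Longrightarrow> y \<in> lie_gen m S \<Longrightarrow> x + y \<in> lie_gen m S"
| smult: "x \<in> lie_gen m S \<Longrightarrow> c \<cdot>\<^sub>m x \<in> lie_gen m S"
| bracket: "x \<in> lie_gen m S \<Longrightarrow> y \<in> lie_gen m S \<Longrightarrow> x * y - y * x \<in> lie_gen m S"

definition gl_mat :: "nat \<Rightarrow> complex mat set" where
  "gl_mat m = carrier_mat m m"

definition sl_mat :: "nat \<Rightarrow> complex mat set" where
  "sl_mat m = {A \<in> carrier_mat m m. (\<Sum>i<m. A $$ (i, i)) = 0}"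

end

theory Submission
  imports Defs "Jordan_Normal_Form.Determinant"
begin

text \<open>Write m = n - 1 and T_d for the m x m tridiagonal matrix with d on the diagonal, b below
  and a above it, so that u_i = e_ii T_1 and v_i = m e_ii T_(-1) + I.

  For d = 1 or d = -1 the matrix T_d is invertible: a kernel vector, padded by a zero at both
  ends, solves a linear recurrence with characteristic roots -d and -d/q, and a nonzero solution
  vanishing at both ends exists only if q^n = 1.

  If a Lie subalgebra P contains every e_ii T, where T is invertible and its nonzero entries are
  exactly those on the three central diagonals, then Q = {X. X T \<in> P} is closed under the
  twisted bracket X T Y - Y T X, because right multiplication by T turns it into the commutator.
  Q contains every e_ii, and twisted brackets of matrix units along the band of T produce every
  e_ij, so Q and hence P = Q T is all of gl_m. For (b), adjoining the scalar
  matrices to the generated algebra gives a Lie algebra containing every e_ii T_(-1), hence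
  gl_m; as the generated algebra lies in sl_m and tr I = m \<noteq> 0, it is all of sl_m.\<close>

section \<open>Matrix units and subspaces of matrices\<close>

text \<open>Matrix indices are 0-based here, whereas emat of Defs takes 1-based indices.\<close>

definition mat_unit :: "nat \<Rightarrow> nat \<Rightarrow> nat \<Rightarrow> 'a :: {zero, one} mat" where
  "mat_unit m i j = mat m m (\<lambda>(r, c). if r = i \<and> c = j then 1 else 0)"

lemma mat_unit_carrier [simp]: "mat_unit m i j \<in> carrier_mat m m"
  by (simp add: mat_unit_def)

lemma dim_mat_unit [simp]: "dim_row (mat_unit m i j) = m" "dim_col (mat_unit m i j) = m"
  by (simp_all add: mat_unit_def)

lemma index_mat_unit [simp]:
  "r < m \<Longrightarrow> c < m \<Longrightarrow> mat_unit m i j $$ (r, c) = (if r = i \<and> c = j then 1 else 0)"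
  by (simp add: mat_unit_def)

lemma index_mat_unit_mult:
  fixes A :: "'a :: semiring_1 mat"
  assumes "A \<in> carrier_mat m k" "r < m" "c < k" "j < m"
  shows "(mat_unit m i j * A) $$ (r, c) = (if r = i then A $$ (j, c) else 0)"
proof -
  have "(mat_unit m i j * A) $$ (r, c)
      = (\<Sum>s \<in> {0..<m}. (if r = i \<and> s = j then 1 else 0) * A $$ (s, c))"
    using assms by (simp add: scalar_prod_def)
  also have "\<dots> = (\<Sum>s \<in> {0..<m}. if s = j then (if r = i then A $$ (j, c) else 0) else 0)"
    by (rule sum.cong) auto
  also have "\<dots> = (if r = i then A $$ (j, c) else 0)"
    using assms by simp
  finally show ?thesis .
qed

lemma index_mult_mat_unit:
  fixes A :: "'a :: semiring_1 mat"
  assumes "A \<in> carrier_mat m k" "r < m" "c < k" "i < k"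
  shows "(A * mat_unit k i j) $$ (r, c) = (if c = j then A $$ (r, i) else 0)"
proof -
  have "(A * mat_unit k i j) $$ (r, c)
      = (\<Sum>s \<in> {0..<k}. A $$ (r, s) * (if s = i \<and> c = j then 1 else 0))"
    using assms by (simp add: scalar_prod_def)
  also have "\<dots> = (\<Sum>s \<in> {0..<k}. if s = i then (if c = j then A $$ (r, i) else 0) else 0)"
    by (rule sum.cong) auto
  also have "\<dots> = (if c = j then A $$ (r, i) else 0)"
    using assms by simp
  finally show ?thesis .
qed

lemma mat_unit_mult_mult_mat_unit:
  fixes A :: "'a :: semiring_1 mat"
  assumes "A \<in> carrier_mat m m" "j < m" "k < m"
  shows "mat_unit m i j * A * mat_unit m k l = A $$ (j, k) \<cdot>\<^sub>m mat_unit m i l"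
proof (rule eq_matI)
  fix r c
  assume "r < dim_row (A $$ (j, k) \<cdot>\<^sub>m mat_unit m i l)"
    and "c < dim_col (A $$ (j, k) \<cdot>\<^sub>m mat_unit m i l)"
  then have rc: "r < m" "c < m" by simp_all
  have "(mat_unit m i j * A * mat_unit m k l) $$ (r, c)
      = (if c = l then (mat_unit m i j * A) $$ (r, k) else 0)"
    by (rule index_mult_mat_unit) (use assms rc in auto)
  then show "(mat_unit m i j * A * mat_unit m k l) $$ (r, c)
      = (A $$ (j, k) \<cdot>\<^sub>m mat_unit m i l) $$ (r, c)"
    using assms rc by (simp add: index_mat_unit_mult del: index_mult_mat)
qed (use assms in auto)

definition mat_subspace :: "nat \<Rightarrow> 'a :: field mat set \<Rightarrow> bool" where
  "mat_subspace m P \<longleftrightarrow> P \<subseteq> carrier_mat m m \<and> 0\<^sub>m m m \<in> P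
     \<and> (\<forall>X \<in> P. \<forall>Y \<in> P. X + Y \<in> P) \<and> (\<forall>c. \<forall>X \<in> P. c \<cdot>\<^sub>m X \<in> P)"

lemma
  assumes "mat_subspace m P"
  shows mat_subspace_carrier: "P \<subseteq> carrier_mat m m"
    and mat_subspace_zero: "0\<^sub>m m m \<in> P"
    and mat_subspace_add: "X \<in> P \<Longrightarrow> Y \<in> P \<Longrightarrow> X + Y \<in> P"
    and mat_subspace_smult: "X \<in> P \<Longrightarrow> c \<cdot>\<^sub>m X \<in> P"
  using assms by (auto simp: mat_subspace_def)

lemma mat_subspace_eq_carrier_if_mat_units:
  assumes P: "mat_subspace m P"
    and units: "\<And>i j. i < m \<Longrightarrow> j < m \<Longrightarrow> mat_unit m i j \<in> P"
  shows "P = carrier_mat m m"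
proof
  show "P \<subseteq> carrier_mat m m" using P by (rule mat_subspace_carrier)
  show "carrier_mat m m \<subseteq> P"
  proof
    fix X :: "'a mat" assume X: "X \<in> carrier_mat m m"
    define part where "part S = mat m m (\<lambda>(r, c). if (r, c) \<in> S then X $$ (r, c) else 0)" for S
    have "part S \<in> P" if "finite S" "S \<subseteq> {..<m} \<times> {..<m}" for S
      using that
    proof (induction S rule: finite_induct)
      case empty
      have "part {} = 0\<^sub>m m m" by (auto simp: part_def)
      then show ?case using mat_subspace_zero[OF P] by simp
    next
      case (insert p S)
      obtain i j where p: "p = (i, j)" "i < m" "j < m" using insert.prems by auto
      have "part (insert p S) = part S + X $$ (i, j) \<cdot>\<^sub>m mat_unit m i j"
        using insert.hyps p by (auto simp: part_def)
      then show ?case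
        using insert mat_subspace_add[OF P] mat_subspace_smult[OF P] units[OF p(2,3)] by simp
    qed
    moreover have "part ({..<m} \<times> {..<m}) = X" using X by (auto simp: part_def)
    ultimately show "X \<in> P" by (metis finite_SigmaI finite_lessThan order_refl)
  qed
qed

section \<open>Twisted brackets and tridiagonal matrices\<close>

definition twisted_bracket :: "'a :: ring mat \<Rightarrow> 'a mat \<Rightarrow> 'a mat \<Rightarrow> 'a mat" where
  "twisted_bracket T X Y = X * T * Y - Y * T * X"

lemma twisted_bracket_carrier:
  "T \<in> carrier_mat m m \<Longrightarrow> X \<in> carrier_mat m m \<Longrightarrow> Y \<in> carrier_mat m m
    \<Longrightarrow> twisted_bracket T X Y \<in> carrier_mat m m"
  by (simp add: twisted_bracket_def minus_carrier_mat)

lemma twisted_bracket_mat_units: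
  fixes T :: "'a :: ring_1 mat"
  assumes "T \<in> carrier_mat m m" "i < m" "j < m" "k < m" "l < m"
  shows "twisted_bracket T (mat_unit m i j) (mat_unit m k l)
    = T $$ (j, k) \<cdot>\<^sub>m mat_unit m i l - T $$ (l, i) \<cdot>\<^sub>m mat_unit m k j"
  using assms by (simp add: twisted_bracket_def mat_unit_mult_mult_mat_unit)

lemma twisted_bracket_lincomb_right:
  fixes T :: "'a :: comm_ring mat"
  assumes "T \<in> carrier_mat m m" "X \<in> carrier_mat m m" "Y \<in> carrier_mat m m" "Z \<in> carrier_mat m m"
  shows "twisted_bracket T X (a \<cdot>\<^sub>m Y - b \<cdot>\<^sub>m Z)
    = a \<cdot>\<^sub>m twisted_bracket T X Y - b \<cdot>\<^sub>m twisted_bracket T X Z"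
proof -
  have "X * T * (a \<cdot>\<^sub>m Y - b \<cdot>\<^sub>m Z) = a \<cdot>\<^sub>m (X * T * Y) - b \<cdot>\<^sub>m (X * T * Z)"
    using assms by (simp add: mult_minus_distrib_mat[where nr = m and n = m and nc = m]
        mult_smult_distrib[where nr = m and n = m and nc = m] assoc_mult_mat[of _ m m _ m _ m]
        minus_carrier_mat)
  moreover have "(a \<cdot>\<^sub>m Y - b \<cdot>\<^sub>m Z) * T * X = a \<cdot>\<^sub>m (Y * T * X) - b \<cdot>\<^sub>m (Z * T * X)"
    using assms by (simp add: minus_mult_distrib_mat[where nr = m and n = m and nc = m]
        mult_smult_assoc_mat[where nr = m and n = m and nc = m] assoc_mult_mat[of _ m m _ m _ m])
  ultimately show ?thesis
    unfolding twisted_bracket_def by (rule_tac eq_matI) (use assms in \<open>auto simp: algebra_simps\<close>)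
qed

lemma twisted_bracket_mult_right:
  fixes T :: "'a :: ring mat"
  assumes "T \<in> carrier_mat m m" "X \<in> carrier_mat m m" "Y \<in> carrier_mat m m"
  shows "twisted_bracket T X Y * T = (X * T) * (Y * T) - (Y * T) * (X * T)"
  using assms
  by (simp add: twisted_bracket_def minus_mult_distrib_mat[where nr = m and n = m and nc = m]
      assoc_mult_mat[of _ m m _ m _ m])

definition tridiagonal_support :: "nat \<Rightarrow> 'a :: zero mat \<Rightarrow> bool" where
  "tridiagonal_support m T \<longleftrightarrow> T \<in> carrier_mat m m \<and>
     (\<forall>r < m. \<forall>c < m. T $$ (r, c) \<noteq> 0 \<longleftrightarrow> r \<le> Suc c \<and> c \<le> Suc r)"

lemma
  assumes "tridiagonal_support m T" "r < m" "c < m"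
  shows tridiagonal_support_nonzero: "r \<le> Suc c \<Longrightarrow> c \<le> Suc r \<Longrightarrow> T $$ (r, c) \<noteq> 0"
    and tridiagonal_support_zero: "Suc c < r \<or> Suc r < c \<Longrightarrow> T $$ (r, c) = 0"
  using assms unfolding tridiagonal_support_def by (meson not_le)+

context
  fixes m :: nat and T :: "'a :: field_char_0 mat" and Q :: "'a mat set"
  assumes T: "tridiagonal_support m T"
    and Q: "mat_subspace m Q"
    and Q_twisted_bracket: "\<And>X Y. X \<in> Q \<Longrightarrow> Y \<in> Q \<Longrightarrow> twisted_bracket T X Y \<in> Q"
    and Q_diagonal_units: "\<And>i. i < m \<Longrightarrow> mat_unit m i i \<in> Q"
begin

lemma neighbour_mat_unit_in_twisted_subalgebra:
  assumes ij: "i < m" "j < m" "i \<noteq> j" "T $$ (i, j) \<noteq> 0"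
  shows "mat_unit m i j \<in> Q"
proof -
  have T_carrier: "T \<in> carrier_mat m m" and T_ii: "T $$ (i, i) \<noteq> 0"
    using T ij by (auto simp: tridiagonal_support_def)
  define t1 t2 d where "t1 = T $$ (i, j)" and "t2 = T $$ (j, i)" and "d = T $$ (i, i)"
  define Y where "Y = twisted_bracket T (mat_unit m i i) (mat_unit m j j)"
  define Z where "Z = twisted_bracket T (mat_unit m i i) Y"
  have Y_Q: "Y \<in> Q" and Z_Q: "Z \<in> Q"
    unfolding Y_def Z_def using ij by (auto intro!: Q_twisted_bracket Q_diagonal_units)
  have Y: "Y = t1 \<cdot>\<^sub>m mat_unit m i j - t2 \<cdot>\<^sub>m mat_unit m j i"
    unfolding Y_def t1_def t2_def using twisted_bracket_mat_units[OF T_carrier] ij by simp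
  have Z: "Z = t1 \<cdot>\<^sub>m (d \<cdot>\<^sub>m mat_unit m i j - t2 \<cdot>\<^sub>m mat_unit m i i)
      - t2 \<cdot>\<^sub>m (t1 \<cdot>\<^sub>m mat_unit m i i - d \<cdot>\<^sub>m mat_unit m j i)"
    unfolding Z_def Y
      twisted_bracket_lincomb_right[OF T_carrier mat_unit_carrier mat_unit_carrier mat_unit_carrier]
    using twisted_bracket_mat_units[OF T_carrier] ij unfolding t1_def t2_def d_def by simp
  \<comment> \<open>Dividing by 2 is where characteristic 0 is needed.\<close>
  have "mat_unit m i j = (1 / (2 * d * t1)) \<cdot>\<^sub>m (d \<cdot>\<^sub>m Y + Z + (2 * t1 * t2) \<cdot>\<^sub>m mat_unit m i i)"
    unfolding Y Z using ij T_ii by (intro eq_matI) (auto simp: t1_def d_def field_simps)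
  then show ?thesis
    using Y_Q Z_Q ij
    by (auto intro!: mat_subspace_add[OF Q] mat_subspace_smult[OF Q] Q_diagonal_units)
qed

lemma mat_units_off_diagonal_in_twisted_subalgebra:
  "Suc i \<le> j \<Longrightarrow> j < m \<Longrightarrow> mat_unit m i j \<in> Q \<and> mat_unit m j i \<in> Q"
proof (induction j rule: nat_induct_at_least)
  case base
  then show ?case
    using tridiagonal_support_nonzero[OF T]
    by (auto intro!: neighbour_mat_unit_in_twisted_subalgebra)
next
  case (Suc j)
  have T_carrier: "T \<in> carrier_mat m m"
    using T by (simp add: tridiagonal_support_def)
  have T_jj: "T $$ (j, j) \<noteq> 0" and T_far: "T $$ (Suc j, i) = 0" "T $$ (i, Suc j) = 0"
    using Suc tridiagonal_support_nonzero[OF T] tridiagonal_support_zero[OF T] by auto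
  have IH: "mat_unit m i j \<in> Q" "mat_unit m j i \<in> Q"
    using Suc by auto
  have neighbours: "mat_unit m j (Suc j) \<in> Q" "mat_unit m (Suc j) j \<in> Q"
    using Suc tridiagonal_support_nonzero[OF T]
    by (auto intro!: neighbour_mat_unit_in_twisted_subalgebra)
  have "mat_unit m i (Suc j)
      = (1 / T $$ (j, j)) \<cdot>\<^sub>m twisted_bracket T (mat_unit m i j) (mat_unit m j (Suc j))"
    "mat_unit m (Suc j) i
      = (1 / T $$ (j, j)) \<cdot>\<^sub>m twisted_bracket T (mat_unit m (Suc j) j) (mat_unit m j i)"
    using Suc T_jj T_far by (auto intro!: eq_matI simp: twisted_bracket_mat_units[OF T_carrier])
  then show ?case
    using IH neighbours by (auto intro!: mat_subspace_smult[OF Q] Q_twisted_bracket)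
qed

lemma twisted_subalgebra_eq_carrier: "Q = carrier_mat m m"
proof (rule mat_subspace_eq_carrier_if_mat_units[OF Q])
  fix i j assume "i < m" "j < m"
  then show "mat_unit m i j \<in> Q"
    using mat_units_off_diagonal_in_twisted_subalgebra[of i j]
      mat_units_off_diagonal_in_twisted_subalgebra[of j i] Q_diagonal_units
    by (cases i j rule: linorder_cases) auto
qed

end

section \<open>Lie subalgebras of gl_m\<close>

definition lie_subalgebra :: "nat \<Rightarrow> 'a :: field mat set \<Rightarrow> bool" where
  "lie_subalgebra m P \<longleftrightarrow> mat_subspace m P \<and> (\<forall>X \<in> P. \<forall>Y \<in> P. X * Y - Y * X \<in> P)"

lemma lie_subalgebra_bracket: "lie_subalgebra m P \<Longrightarrow> X \<in> P \<Longrightarrow> Y \<in> P \<Longrightarrow> X * Y - Y * X \<in> P"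
  by (simp add: lie_subalgebra_def)

lemma mat_subspace_mult_right_preimage:
  assumes P: "mat_subspace m P" and T: "T \<in> carrier_mat m m"
  shows "mat_subspace m {X \<in> carrier_mat m m. X * T \<in> P}" (is "mat_subspace m ?Q")
  unfolding mat_subspace_def
proof (intro conjI ballI allI)
  show "0\<^sub>m m m \<in> ?Q"
    using T mat_subspace_zero[OF P] by simp
  show "X + Y \<in> ?Q" if "X \<in> ?Q" "Y \<in> ?Q" for X Y
  proof -
    have "(X + Y) * T = X * T + Y * T"
      by (rule add_mult_distrib_mat) (use that T in auto)
    then show ?thesis
      using that mat_subspace_add[OF P] by simp
  qed
  show "c \<cdot>\<^sub>m X \<in> ?Q" if "X \<in> ?Q" for X c
  proof -
    have "(c \<cdot>\<^sub>m X) * T = c \<cdot>\<^sub>m (X * T)"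
      by (rule mult_smult_assoc_mat) (use that T in auto)
    then show ?thesis
      using that mat_subspace_smult[OF P] by simp
  qed
qed auto

lemma lie_subalgebra_eq_carrier_if_rows_of_tridiagonal:
  fixes T :: "'a :: field_char_0 mat"
  assumes P: "lie_subalgebra m P" and T: "tridiagonal_support m T" "det T \<noteq> 0"
    and rows: "\<And>i. i < m \<Longrightarrow> mat_unit m i i * T \<in> P"
  shows "P = carrier_mat m m"
proof
  have P_subspace: "mat_subspace m P" and T_carrier: "T \<in> carrier_mat m m"
    using P T by (simp_all add: lie_subalgebra_def tridiagonal_support_def)
  then show "P \<subseteq> carrier_mat m m" by (simp add: mat_subspace_carrier)
  define Q where "Q = {X \<in> carrier_mat m m. X * T \<in> P}"
  have Q_eq: "Q = carrier_mat m m"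
  proof (rule twisted_subalgebra_eq_carrier[OF T(1)])
    show "mat_subspace m Q"
      unfolding Q_def using P_subspace T_carrier by (rule mat_subspace_mult_right_preimage)
    show "twisted_bracket T X Y \<in> Q" if "X \<in> Q" "Y \<in> Q" for X Y
    proof -
      have "X \<in> carrier_mat m m" "Y \<in> carrier_mat m m"
        using that by (simp_all add: Q_def)
      then have "twisted_bracket T X Y \<in> carrier_mat m m"
        and "twisted_bracket T X Y * T = (X * T) * (Y * T) - (Y * T) * (X * T)"
        using T_carrier by (simp_all add: twisted_bracket_carrier twisted_bracket_mult_right)
      then show ?thesis
        using that lie_subalgebra_bracket[OF P] by (simp add: Q_def)
    qed
    show "mat_unit m i i \<in> Q" if "i < m" for i
      using rows that by (simp add: Q_def)
  qed
  obtain T' where T': "T' \<in> carrier_mat m m" "T' * T = 1\<^sub>m m"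
    using det_non_zero_imp_unit[OF T_carrier T(2)] by (auto simp: Units_def ring_mat_def)
  show "carrier_mat m m \<subseteq> P"
  proof
    fix X :: "'a mat" assume X: "X \<in> carrier_mat m m"
    then have "X * T' \<in> Q" using T' Q_eq by simp
    then have "X * T' * T \<in> P" by (simp add: Q_def)
    then show "X \<in> P" using X T' T_carrier by simp
  qed
qed

lemma lie_subalgebra_lie_gen:
  assumes "S \<subseteq> carrier_mat m m"
  shows "lie_subalgebra m (lie_gen m S)"
proof -
  have "lie_gen m S \<subseteq> carrier_mat m m"
  proof
    fix X assume "X \<in> lie_gen m S"
    then show "X \<in> carrier_mat m m"
      by (induction rule: lie_gen.induct) (use assms in auto)
  qed
  then show ?thesis
    by (auto simp: lie_subalgebra_def mat_subspace_def intro: lie_gen.intros)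
qed

lemma lie_gen_least:
  assumes "lie_subalgebra m P" "S \<subseteq> P"
  shows "lie_gen m S \<subseteq> P"
proof
  fix X assume "X \<in> lie_gen m S"
  then show "X \<in> P"
    using assms by (induction rule: lie_gen.induct)
      (auto simp: lie_subalgebra_def mat_subspace_def)
qed

lemma trace_commutator_eq_0:
  fixes X Y :: "'a :: comm_ring mat"
  assumes "X \<in> carrier_mat m m" "Y \<in> carrier_mat m m"
  shows "(\<Sum>i<m. (X * Y - Y * X) $$ (i, i)) = 0"
proof -
  have "(\<Sum>i<m. (X * Y - Y * X) $$ (i, i))
      = (\<Sum>i<m. \<Sum>k<m. X $$ (i, k) * Y $$ (k, i)) - (\<Sum>i<m. \<Sum>k<m. Y $$ (i, k) * X $$ (k, i))"
    using assms by (simp add: sum_subtractf scalar_prod_def lessThan_atLeast0)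
  also have "\<dots> = 0"
    by (subst sum.swap) (simp add: mult.commute)
  finally show ?thesis .
qed

lemma lie_subalgebra_sl_mat: "lie_subalgebra m (sl_mat m)"
  by (auto simp: lie_subalgebra_def mat_subspace_def sl_mat_def sum.distrib
      sum_distrib_left[symmetric] trace_commutator_eq_0)

lemma mult_add_scalars:
  fixes X Y :: "'a :: comm_ring_1 mat"
  assumes "X \<in> carrier_mat m m" "Y \<in> carrier_mat m m"
  shows "(X + a \<cdot>\<^sub>m 1\<^sub>m m) * (Y + b \<cdot>\<^sub>m 1\<^sub>m m) = X * Y + a \<cdot>\<^sub>m Y + (b \<cdot>\<^sub>m X + (a * b) \<cdot>\<^sub>m 1\<^sub>m m)"
proof -
  have "(X + a \<cdot>\<^sub>m 1\<^sub>m m) * (Y + b \<cdot>\<^sub>m 1\<^sub>m m)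
      = X * Y + a \<cdot>\<^sub>m 1\<^sub>m m * Y + (X * (b \<cdot>\<^sub>m 1\<^sub>m m) + a \<cdot>\<^sub>m 1\<^sub>m m * (b \<cdot>\<^sub>m 1\<^sub>m m))"
    using assms by (simp add: add_mult_distrib_mat[where nr = m and n = m and nc = m]
        mult_add_distrib_mat[where nr = m and n = m and nc = m])
  also have "\<dots> = X * Y + a \<cdot>\<^sub>m Y + (b \<cdot>\<^sub>m X + (a * b) \<cdot>\<^sub>m 1\<^sub>m m)"
    using assms by (simp add: mult_smult_distrib[where nr = m and n = m and nc = m]
        mult_smult_assoc_mat[where nr = m and n = m and nc = m])
      (auto intro!: eq_matI)
  finally show ?thesis .
qed

lemma commutator_add_scalars:
  fixes X Y :: "'a :: comm_ring_1 mat"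
  assumes "X \<in> carrier_mat m m" "Y \<in> carrier_mat m m"
  shows "(X + a \<cdot>\<^sub>m 1\<^sub>m m) * (Y + b \<cdot>\<^sub>m 1\<^sub>m m) - (Y + b \<cdot>\<^sub>m 1\<^sub>m m) * (X + a \<cdot>\<^sub>m 1\<^sub>m m)
    = X * Y - Y * X"
  using assms
  by (auto intro!: eq_matI
      simp: mult_add_scalars[OF assms] mult_add_scalars[OF assms(2,1)] algebra_simps)

lemma lie_subalgebra_add_scalars:
  fixes L :: "'a :: field mat set"
  assumes L: "lie_subalgebra m L"
  shows "lie_subalgebra m {X + c \<cdot>\<^sub>m 1\<^sub>m m | X c. X \<in> L}"
    (is "lie_subalgebra m ?N")
proof -
  have L_subspace: "mat_subspace m L"
    using L by (simp add: lie_subalgebra_def)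
  have L_carrier: "X \<in> carrier_mat m m" if "X \<in> L" for X
    using mat_subspace_carrier[OF L_subspace] that by auto
  have "0\<^sub>m m m \<in> ?N"
  proof -
    have "0\<^sub>m m m = (0\<^sub>m m m :: 'a mat) + 0 \<cdot>\<^sub>m 1\<^sub>m m" by (auto intro!: eq_matI)
    then show ?thesis using mat_subspace_zero[OF L_subspace] by blast
  qed
  moreover have "X + c \<cdot>\<^sub>m 1\<^sub>m m + (Y + d \<cdot>\<^sub>m 1\<^sub>m m) \<in> ?N" if "X \<in> L" "Y \<in> L" for X Y c d
  proof -
    have "X + c \<cdot>\<^sub>m 1\<^sub>m m + (Y + d \<cdot>\<^sub>m 1\<^sub>m m) = (X + Y) + (c + d) \<cdot>\<^sub>m 1\<^sub>m m"
      using L_carrier[OF that(1)] L_carrier[OF that(2)]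
      by (auto intro!: eq_matI simp: algebra_simps)
    then show ?thesis using that mat_subspace_add[OF L_subspace] by blast
  qed
  moreover have "e \<cdot>\<^sub>m (X + c \<cdot>\<^sub>m 1\<^sub>m m) \<in> ?N" if "X \<in> L" for X c e
  proof -
    have "e \<cdot>\<^sub>m (X + c \<cdot>\<^sub>m 1\<^sub>m m) = e \<cdot>\<^sub>m X + (e * c) \<cdot>\<^sub>m 1\<^sub>m m"
      using L_carrier[OF that] by (auto intro!: eq_matI simp: algebra_simps)
    then show ?thesis using that mat_subspace_smult[OF L_subspace] by blast
  qed
  moreover have "(X + c \<cdot>\<^sub>m 1\<^sub>m m) * (Y + d \<cdot>\<^sub>m 1\<^sub>m m) - (Y + d \<cdot>\<^sub>m 1\<^sub>m m) * (X + c \<cdot>\<^sub>m 1\<^sub>m m) \<in> ?N"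
    if "X \<in> L" "Y \<in> L" for X Y c d
  proof -
    have "X * Y - Y * X \<in> L" using L that by (simp add: lie_subalgebra_def)
    moreover have "X * Y - Y * X = (X * Y - Y * X) + 0 \<cdot>\<^sub>m 1\<^sub>m m"
      using L_carrier[OF that(1)] L_carrier[OF that(2)] by (auto intro!: eq_matI)
    ultimately show ?thesis
      unfolding commutator_add_scalars[OF L_carrier L_carrier, OF that] by blast
  qed
  ultimately show ?thesis
    using L_carrier by (auto simp: lie_subalgebra_def mat_subspace_def)
qed

lemma lie_subalgebra_eq_sl_if_rows_of_tridiagonal_mod_scalars:
  fixes T :: "complex mat"
  assumes L: "lie_subalgebra m L" "L \<subseteq> sl_mat m" and "m \<noteq> 0"
    and T: "tridiagonal_support m T" "det T \<noteq> 0"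
    and rows: "\<And>i. i < m \<Longrightarrow> \<exists>a b. a \<noteq> 0 \<and> a \<cdot>\<^sub>m (mat_unit m i i * T) + b \<cdot>\<^sub>m 1\<^sub>m m \<in> L"
  shows "L = sl_mat m"
proof
  show "L \<subseteq> sl_mat m" by (fact L(2))
  define N where "N = {X + c \<cdot>\<^sub>m 1\<^sub>m m | X c. X \<in> L}"
  have L_carrier: "X \<in> carrier_mat m m" if "X \<in> L" for X
    using L(2) that by (auto simp: sl_mat_def)
  have T_carrier: "T \<in> carrier_mat m m"
    using T by (simp add: tridiagonal_support_def)
  have "N = carrier_mat m m"
  proof (rule lie_subalgebra_eq_carrier_if_rows_of_tridiagonal[OF _ T])
    show "lie_subalgebra m N"
      unfolding N_def by (rule lie_subalgebra_add_scalars[OF L(1)])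
    show "mat_unit m i i * T \<in> N" if i: "i < m" for i
    proof -
      obtain a b where "a \<noteq> 0" and "a \<cdot>\<^sub>m (mat_unit m i i * T) + b \<cdot>\<^sub>m 1\<^sub>m m \<in> L"
        using rows[OF i] by blast
      then have "(1 / a) \<cdot>\<^sub>m (a \<cdot>\<^sub>m (mat_unit m i i * T) + b \<cdot>\<^sub>m 1\<^sub>m m) \<in> L"
        using L(1) mat_subspace_smult by (auto simp: lie_subalgebra_def)
      moreover have "mat_unit m i i * T
          = (1 / a) \<cdot>\<^sub>m (a \<cdot>\<^sub>m (mat_unit m i i * T) + b \<cdot>\<^sub>m 1\<^sub>m m) + (- b / a) \<cdot>\<^sub>m 1\<^sub>m m"
        using \<open>a \<noteq> 0\<close> T_carrier by (auto intro!: eq_matI simp: field_simps)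
      ultimately show ?thesis unfolding N_def by blast
    qed
  qed
  show "sl_mat m \<subseteq> L"
  proof
    fix X assume X: "X \<in> sl_mat m"
    then have "X \<in> N" using \<open>N = carrier_mat m m\<close> by (simp add: sl_mat_def)
    then obtain Y c where XY: "X = Y + c \<cdot>\<^sub>m 1\<^sub>m m" and Y: "Y \<in> L"
      by (auto simp: N_def)
    have "0 = (\<Sum>i<m. X $$ (i, i))" using X by (simp add: sl_mat_def)
    also have "\<dots> = (\<Sum>i<m. Y $$ (i, i)) + of_nat m * c"
      using XY L_carrier[OF Y] by (simp add: sum.distrib)
    also have "(\<Sum>i<m. Y $$ (i, i)) = 0"
      using Y L(2) by (auto simp: sl_mat_def)
    finally have "c = 0" using \<open>m \<noteq> 0\<close> by simp
    moreover have "Y + 0 \<cdot>\<^sub>m 1\<^sub>m m = Y"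
      using L_carrier[OF Y] by (auto intro!: eq_matI)
    ultimately show "X \<in> L" using XY Y by simp
  qed
qed

section \<open>Tridiagonal Toeplitz matrices\<close>

definition tridiag_mat :: "nat \<Rightarrow> 'a :: zero \<Rightarrow> 'a \<Rightarrow> 'a \<Rightarrow> 'a mat" where
  "tridiag_mat m d \<beta> \<alpha> = mat m m (\<lambda>(r, c).
     if c = r then d else if Suc c = r then \<beta> else if c = Suc r then \<alpha> else 0)"

lemma tridiag_mat_carrier [simp]: "tridiag_mat m d \<beta> \<alpha> \<in> carrier_mat m m"
  by (simp add: tridiag_mat_def)

lemma dim_tridiag_mat [simp]:
  "dim_row (tridiag_mat m d \<beta> \<alpha>) = m" "dim_col (tridiag_mat m d \<beta> \<alpha>) = m"
  by (simp_all add: tridiag_mat_def)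

lemma index_tridiag_mat:
  "r < m \<Longrightarrow> c < m \<Longrightarrow> tridiag_mat m d \<beta> \<alpha> $$ (r, c) =
     (if c = r then d else if Suc c = r then \<beta> else if c = Suc r then \<alpha> else 0)"
  by (simp add: tridiag_mat_def)

lemma tridiagonal_support_tridiag_mat:
  "d \<noteq> 0 \<Longrightarrow> \<beta> \<noteq> 0 \<Longrightarrow> \<alpha> \<noteq> 0 \<Longrightarrow> tridiagonal_support m (tridiag_mat m d \<beta> \<alpha>)"
  by (auto simp: tridiagonal_support_def index_tridiag_mat)

lemma index_tridiag_mat_mult_vec:
  fixes v :: "'a :: comm_semiring_1 vec"
  assumes v: "v \<in> carrier_vec m" and k: "k < m"
  shows "(tridiag_mat m d \<beta> \<alpha> *\<^sub>v v) $ k = (if 0 < k then \<beta> * v $ (k - 1) else 0) + d * v $ k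
     + (if Suc k < m then \<alpha> * v $ Suc k else 0)"
proof -
  have "(tridiag_mat m d \<beta> \<alpha> *\<^sub>v v) $ k = (\<Sum>c<m. tridiag_mat m d \<beta> \<alpha> $$ (k, c) * v $ c)"
    using v k by (simp add: scalar_prod_def lessThan_atLeast0 tridiag_mat_def)
  also have "\<dots> = (\<Sum>c<m. (if 0 < k \<and> c = k - 1 then \<beta> * v $ c else 0)
      + (if c = k then d * v $ c else 0) + (if c = Suc k then \<alpha> * v $ c else 0))"
    using k by (intro sum.cong) (auto simp: index_tridiag_mat)
  also have "\<dots> = (if 0 < k then \<beta> * v $ (k - 1) else 0) + d * v $ k
     + (if Suc k < m then \<alpha> * v $ Suc k else 0)"
    using k by (simp add: sum.distrib sum.If_cases)
  finally show ?thesis .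
qed

lemma linear_recurrence_closed_form:
  fixes y :: "nat \<Rightarrow> 'a :: comm_ring_1"
  assumes "y 0 = 0"
    and recurrence: "\<And>k. k < N \<Longrightarrow> y (Suc (Suc k)) = (r + s) * y (Suc k) - r * s * y k"
    and "k \<le> Suc N"
  shows "(s - r) * y k = (s ^ k - r ^ k) * y 1"
  using \<open>k \<le> Suc N\<close>
proof (induction k rule: induct_nat_012)
  case (ge2 k)
  have "k < N" and IH: "(s - r) * y k = (s ^ k - r ^ k) * y 1"
      "(s - r) * y (Suc k) = (s ^ Suc k - r ^ Suc k) * y 1"
    using ge2.IH ge2.prems by simp_all
  have "(s - r) * y (Suc (Suc k)) = (r + s) * ((s - r) * y (Suc k)) - r * s * ((s - r) * y k)"
    unfolding recurrence[OF \<open>k < N\<close>] by (simp add: algebra_simps)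
  also have "\<dots> = ((r + s) * (s ^ Suc k - r ^ Suc k) - r * s * (s ^ k - r ^ k)) * y 1"
    unfolding IH by (simp add: algebra_simps)
  also have "\<dots> = (s ^ Suc (Suc k) - r ^ Suc (Suc k)) * y 1"
    by (simp add: algebra_simps)
  finally show ?case .
qed (simp_all add: \<open>y 0 = 0\<close>)

text \<open>The matrix is parametrised by the roots r, s of its characteristic polynomial
  \<alpha> x^2 + d x + \<beta>.\<close>

lemma det_tridiag_mat_nonzero:
  fixes \<alpha> r s :: "'a :: field"
  assumes "\<alpha> \<noteq> 0" "r \<noteq> s" "r ^ Suc m \<noteq> s ^ Suc m"
  shows "det (tridiag_mat m (- \<alpha> * (r + s)) (\<alpha> * r * s) \<alpha>) \<noteq> 0"
proof -
  let ?T = "tridiag_mat m (- \<alpha> * (r + s)) (\<alpha> * r * s) \<alpha>"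
  have "v = 0\<^sub>v m" if v: "v \<in> carrier_vec m" and Tv: "?T *\<^sub>v v = 0\<^sub>v m" for v
  proof -
    define y where "y k = (if 1 \<le> k \<and> k \<le> m then v $ (k - 1) else 0)" for k
    have recurrence: "y (Suc (Suc k)) = (r + s) * y (Suc k) - r * s * y k" if k: "k < m" for k
    proof -
      have "(?T *\<^sub>v v) $ k = 0" using Tv k by simp
      then have "\<alpha> * (r * s * y k - (r + s) * y (Suc k) + y (Suc (Suc k))) = 0"
        unfolding index_tridiag_mat_mult_vec[OF v k] using k by (auto simp: y_def algebra_simps)
      then have "r * s * y k - (r + s) * y (Suc k) + y (Suc (Suc k)) = 0"
        using \<open>\<alpha> \<noteq> 0\<close> by simp
      then show ?thesis by (simp add: algebra_simps)
    qed
    have closed_form: "(s - r) * y k = (s ^ k - r ^ k) * y 1" if "k \<le> Suc m" for k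
      using linear_recurrence_closed_form[where y = y and N = m, OF _ recurrence that]
      by (simp add: y_def)
    have "y 1 = 0"
      using closed_form[of "Suc m"] assms(3) by (simp add: y_def)
    show "v = 0\<^sub>v m"
    proof (rule eq_vecI)
      fix k assume "k < dim_vec (0\<^sub>v m)"
      then have "k < m" by simp
      with closed_form[of "Suc k"] \<open>y 1 = 0\<close> assms(2) show "v $ k = 0\<^sub>v m $ k"
        by (simp add: y_def)
    qed (use v in simp)
  qed
  then show ?thesis
    using det_0_iff_vec_prod_zero[OF tridiag_mat_carrier] by blast
qed

lemma
  fixes q d :: complex
  assumes "q \<noteq> 0" and not_root_of_unity: "\<forall>k::nat. k > 0 \<longrightarrow> q ^ k \<noteq> 1" and "d * d = 1"
  shows tridiagonal_support_tridiag_mat_ucoef: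
      "tridiagonal_support m (tridiag_mat m d (ucoef_b q) (ucoef_a q))"
    and det_tridiag_mat_ucoef_nonzero: "det (tridiag_mat m d (ucoef_b q) (ucoef_a q)) \<noteq> 0"
proof -
  have "q \<noteq> 1" "q ^ Suc m \<noteq> 1"
    using not_root_of_unity by (metis One_nat_def power_one_right zero_less_Suc)+
  have "1 + q \<noteq> 0"
    using not_root_of_unity[rule_format, of 2] by (auto simp: add_eq_0_iff)
  moreover have "q + q * q = q * (1 + q)" by (simp add: algebra_simps)
  ultimately have "q + q * q \<noteq> 0" using \<open>q \<noteq> 0\<close> by simp
  then have a: "ucoef_a q \<noteq> 0" "ucoef_b q \<noteq> 0"
      "ucoef_a q * (1 + 1 / q) = 1" "ucoef_a q / q = ucoef_b q"
    using \<open>q \<noteq> 0\<close> \<open>1 + q \<noteq> 0\<close> by (simp_all add: ucoef_a_def ucoef_b_def field_simps)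
  have "d \<noteq> 0" using \<open>d * d = 1\<close> by auto
  then show "tridiagonal_support m (tridiag_mat m d (ucoef_b q) (ucoef_a q))"
    using a(2,1) by (rule tridiagonal_support_tridiag_mat)
  have "- ucoef_a q * (- d + - d / q) = d * (ucoef_a q * (1 + 1 / q))"
    by (simp add: algebra_simps)
  with a(3) have "d = - ucoef_a q * (- d + - d / q)"
    by simp
  moreover have "ucoef_a q * (- d) * (- d / q) = (d * d) * (ucoef_a q / q)"
    by (simp add: algebra_simps)
  with a(4) \<open>d * d = 1\<close> have "ucoef_b q = ucoef_a q * (- d) * (- d / q)"
    by simp
  moreover have "- d \<noteq> - d / q"
    using \<open>d \<noteq> 0\<close> \<open>q \<noteq> 1\<close> \<open>q \<noteq> 0\<close> by (auto simp: field_simps)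
  moreover have "(- d) ^ Suc m \<noteq> (- d) ^ Suc m / q ^ Suc m"
    using \<open>q ^ Suc m \<noteq> 1\<close> \<open>d \<noteq> 0\<close> \<open>q \<noteq> 0\<close> by (simp add: field_simps del: power_Suc)
  then have "(- d) ^ Suc m \<noteq> (- d / q) ^ Suc m"
    by (metis power_divide)
  ultimately show "det (tridiag_mat m d (ucoef_b q) (ucoef_a q)) \<noteq> 0"
    using det_tridiag_mat_nonzero[of "ucoef_a q" "- d" "- d / q" m] a(1) by simp
qed

section \<open>The generators u_i and v_i\<close>

lemma emat_carrier: "emat m i j \<in> carrier_mat m m"
  by (simp add: emat_def)

lemma dim_emat [simp]: "dim_row (emat m i j) = m" "dim_col (emat m i j) = m"
  by (simp_all add: emat_def)

lemma index_emat:
  "r < m \<Longrightarrow> c < m \<Longrightarrow> emat m i j $$ (r, c) = (if i = Suc r \<and> j = Suc c then 1 else 0)"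
  by (auto simp: emat_def)

lemma umat_eq_row_of_tridiag_mat:
  assumes "i < n - 1"
  shows "umat n q (Suc i) = mat_unit (n - 1) i i * tridiag_mat (n - 1) 1 (ucoef_b q) (ucoef_a q)"
proof (rule eq_matI)
  fix r c
  assume "r < dim_row (mat_unit (n - 1) i i * tridiag_mat (n - 1) 1 (ucoef_b q) (ucoef_a q))"
    "c < dim_col (mat_unit (n - 1) i i * tridiag_mat (n - 1) 1 (ucoef_b q) (ucoef_a q))"
  then have rc: "r < n - 1" "c < n - 1" by simp_all
  have "umat n q (Suc i) $$ (r, c) = (if r = i \<and> Suc c = i then ucoef_b q else 0)
      + (if r = i \<and> c = i then 1 else 0) + (if r = i \<and> c = Suc i then ucoef_a q else 0)"
    using rc by (auto simp: umat_def index_emat kdelta_def)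
  moreover have "(mat_unit (n - 1) i i * tridiag_mat (n - 1) 1 (ucoef_b q) (ucoef_a q)) $$ (r, c)
      = (if r = i then tridiag_mat (n - 1) 1 (ucoef_b q) (ucoef_a q) $$ (i, c) else 0)"
    by (rule index_mat_unit_mult) (use rc assms in auto)
  ultimately show "umat n q (Suc i) $$ (r, c)
      = (mat_unit (n - 1) i i * tridiag_mat (n - 1) 1 (ucoef_b q) (ucoef_a q)) $$ (r, c)"
    using rc assms by (auto simp: index_tridiag_mat)
qed (simp_all add: umat_def)

lemma vmat_eq_row_of_tridiag_mat:
  assumes "i < n - 1"
  shows "vmat n q (Suc i)
    = of_nat (n - 1) \<cdot>\<^sub>m (mat_unit (n - 1) i i * tridiag_mat (n - 1) (- 1) (ucoef_b q) (ucoef_a q))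
      + 1\<^sub>m (n - 1)"
proof -
  define R where "R = mat_unit (n - 1) i i * tridiag_mat (n - 1) (- 1) (ucoef_b q) (ucoef_a q)"
  have R_carrier: "R \<in> carrier_mat (n - 1) (n - 1)"
    unfolding R_def by (rule mult_carrier_mat[OF mat_unit_carrier tridiag_mat_carrier])
  have R: "R $$ (r, c)
      = (if r = i then tridiag_mat (n - 1) (- 1) (ucoef_b q) (ucoef_a q) $$ (i, c) else 0)"
    if "r < n - 1" "c < n - 1" for r c
    unfolding R_def by (rule index_mat_unit_mult) (use that assms in auto)
  have "vmat n q (Suc i) = of_nat (n - 1) \<cdot>\<^sub>m R + 1\<^sub>m (n - 1)"
  proof (rule eq_matI)
    fix r c assume "r < dim_row (of_nat (n - 1) \<cdot>\<^sub>m R + 1\<^sub>m (n - 1))"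
      "c < dim_col (of_nat (n - 1) \<cdot>\<^sub>m R + 1\<^sub>m (n - 1))"
    then have rc: "r < n - 1" "c < n - 1" by simp_all
    then show "vmat n q (Suc i) $$ (r, c) = (of_nat (n - 1) \<cdot>\<^sub>m R + 1\<^sub>m (n - 1)) $$ (r, c)"
      using R_carrier assms
      by (auto simp: R vmat_def Emat_def index_emat kdelta_def index_tridiag_mat algebra_simps)
  qed (use R_carrier in \<open>simp_all add: vmat_def Emat_def\<close>)
  then show ?thesis by (simp add: R_def)
qed

lemma vmat_in_sl_mat:
  assumes "i < n - 1"
  shows "vmat n q (Suc i) \<in> sl_mat (n - 1)"
proof -
  define R where "R = mat_unit (n - 1) i i * tridiag_mat (n - 1) (- 1) (ucoef_b q) (ucoef_a q)"
  have R_carrier: "R \<in> carrier_mat (n - 1) (n - 1)"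
    unfolding R_def by (rule mult_carrier_mat[OF mat_unit_carrier tridiag_mat_carrier])
  have v: "vmat n q (Suc i) = of_nat (n - 1) \<cdot>\<^sub>m R + 1\<^sub>m (n - 1)"
    unfolding R_def by (rule vmat_eq_row_of_tridiag_mat[OF assms])
  have "R $$ (r, r) = (if r = i then - 1 else 0)" if "r < n - 1" for r
    unfolding R_def using that assms
    by (subst index_mat_unit_mult) (auto simp: index_tridiag_mat)
  then have "vmat n q (Suc i) $$ (r, r) = 1 - (if r = i then of_nat (n - 1) else 0)"
    if "r < n - 1" for r
    using that R_carrier unfolding v by simp
  then have "(\<Sum>r<n - 1. vmat n q (Suc i) $$ (r, r)) = 0"
    using assms by (simp add: sum_subtractf)
  then show ?thesis
    using R_carrier unfolding sl_mat_def v by simp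
qed

lemma umat_carrier: "umat n q i \<in> carrier_mat (n - 1) (n - 1)"
  unfolding umat_def by (intro add_carrier_mat smult_carrier_mat emat_carrier)

lemma vmat_carrier: "vmat n q i \<in> carrier_mat (n - 1) (n - 1)"
  unfolding vmat_def Emat_def
  by (intro add_carrier_mat minus_carrier_mat smult_carrier_mat one_carrier_mat emat_carrier)

lemma lie_gen_umat_eq_gl_mat:
  fixes q :: complex
  assumes "q \<noteq> 0" and "\<forall>k::nat. k > 0 \<longrightarrow> q ^ k \<noteq> 1"
  shows "lie_gen (n - 1) (umat n q ` {1..n-1}) = gl_mat (n - 1)"
  unfolding gl_mat_def
proof (rule lie_subalgebra_eq_carrier_if_rows_of_tridiagonal
    [where T = "tridiag_mat (n - 1) 1 (ucoef_b q) (ucoef_a q)"])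
  show "lie_subalgebra (n - 1) (lie_gen (n - 1) (umat n q ` {1..n-1}))"
    by (rule lie_subalgebra_lie_gen) (use umat_carrier in auto)
  show "tridiagonal_support (n - 1) (tridiag_mat (n - 1) 1 (ucoef_b q) (ucoef_a q))"
    and "det (tridiag_mat (n - 1) 1 (ucoef_b q) (ucoef_a q)) \<noteq> 0"
    using assms
    by (simp_all add: tridiagonal_support_tridiag_mat_ucoef det_tridiag_mat_ucoef_nonzero)
  show "mat_unit (n - 1) i i * tridiag_mat (n - 1) 1 (ucoef_b q) (ucoef_a q)
      \<in> lie_gen (n - 1) (umat n q ` {1..n-1})" if "i < n - 1" for i
    unfolding umat_eq_row_of_tridiag_mat[OF that, symmetric]
    by (rule lie_gen.gen) (use that in simp)
qed

lemma lie_gen_vmat_eq_sl_mat: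
  fixes q :: complex
  assumes "n \<ge> 2" and "q \<noteq> 0" and "\<forall>k::nat. k > 0 \<longrightarrow> q ^ k \<noteq> 1"
  shows "lie_gen (n - 1) (vmat n q ` {1..n-1}) = sl_mat (n - 1)"
proof (rule lie_subalgebra_eq_sl_if_rows_of_tridiagonal_mod_scalars
    [where T = "tridiag_mat (n - 1) (- 1) (ucoef_b q) (ucoef_a q)"])
  show "lie_subalgebra (n - 1) (lie_gen (n - 1) (vmat n q ` {1..n-1}))"
    by (rule lie_subalgebra_lie_gen) (use vmat_carrier in auto)
  show "lie_gen (n - 1) (vmat n q ` {1..n-1}) \<subseteq> sl_mat (n - 1)"
  proof (rule lie_gen_least[OF lie_subalgebra_sl_mat], rule image_subsetI)
    fix j assume "j \<in> {1..n-1}"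
    then obtain i where "j = Suc i" "i < n - 1" by (cases j) auto
    then show "vmat n q j \<in> sl_mat (n - 1)" using vmat_in_sl_mat[of i n q] by simp
  qed
  show "n - 1 \<noteq> 0" using assms(1) by simp
  show "tridiagonal_support (n - 1) (tridiag_mat (n - 1) (- 1) (ucoef_b q) (ucoef_a q))"
    and "det (tridiag_mat (n - 1) (- 1) (ucoef_b q) (ucoef_a q)) \<noteq> 0"
    using assms(2,3)
    by (simp_all add: tridiagonal_support_tridiag_mat_ucoef det_tridiag_mat_ucoef_nonzero)
  show "\<exists>a b. a \<noteq> 0
      \<and> a \<cdot>\<^sub>m (mat_unit (n - 1) i i * tridiag_mat (n - 1) (- 1) (ucoef_b q) (ucoef_a q))
      + b \<cdot>\<^sub>m 1\<^sub>m (n - 1) \<in> lie_gen (n - 1) (vmat n q ` {1..n-1})" if "i < n - 1" for i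
  proof (intro exI conjI)
    show "of_nat (n - 1) \<noteq> (0 :: complex)" using assms(1) by simp
    have "1 \<cdot>\<^sub>m 1\<^sub>m (n - 1) = (1\<^sub>m (n - 1) :: complex mat)"
      by (auto intro!: eq_matI)
    moreover have "vmat n q (Suc i) \<in> lie_gen (n - 1) (vmat n q ` {1..n-1})"
      using that by (intro lie_gen.gen) simp
    ultimately show "of_nat (n - 1)
        \<cdot>\<^sub>m (mat_unit (n - 1) i i * tridiag_mat (n - 1) (- 1) (ucoef_b q) (ucoef_a q))
        + 1 \<cdot>\<^sub>m 1\<^sub>m (n - 1) \<in> lie_gen (n - 1) (vmat n q ` {1..n-1})"
      using that by (simp add: vmat_eq_row_of_tridiag_mat)
  qed
qed

theorem propositionA5:
  fixes n :: nat and q :: complex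
  assumes "n \<ge> 3" and "q \<noteq> 0" and "\<forall>k::nat. k > 0 \<longrightarrow> q ^ k \<noteq> 1"
  shows "lie_gen (n - 1) (umat n q ` {1..n-1}) = gl_mat (n - 1)
       \<and> lie_gen (n - 1) (vmat n q ` {1..n-1}) = sl_mat (n - 1)"
  using assms lie_gen_umat_eq_gl_mat lie_gen_vmat_eq_sl_mat by simp

end
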